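(* The point $p=(v_{0,0},v_{1,0},v_{2,0},\ldots)$ is a fixed point of $T$, and it is the only periodic point of $(X,T)$.
   Context: Paths and cycles: a graph is $G=(V,E)$ with $V$ finite and $E\subset V\times V$. A path is a finite sequence of vertices $(u_0,\dots,u_L)$ with $(u_j,u_{j+1})\in E$; its length is $|\cdot|=L$; a cycle is a path with $u_0=u_L$. For paths where one ends where the next starts, $+$ denotes concatenation and $a\,c$ means the cycle $c$ traversed $a$ times. Construction: $G_0=(V_0,E_0)$ with $V_0=\{v_{0,0}\}$, $E_0=\{e_{0,0}\}$, $e_{0,0}=(v_{0,0},v_{0,0})$. For $n\geq1$, $G_n=(V_n,E_n)$ consists of a vertex $v_{n,0}$, the loop $e_{n,0}=(v_{n,0},v_{n,0})$, and $n$ cycles $c_{n,1},\dots,c_{n,n}$, each starting and ending at $v_{n,0}$, whose vertices other than $v_{n,0}$ are pairwise distinct (within each cycle and across cycles); $V_n$ is the set of all these vertices and $E_n$ consists of $e_{n,0}$ and the edges of the cycles. The maps $\varphi_n\colon V_{n+1}\to V_n$ and the lengths of the cycles $c_{n+1,i}$ are defined together: $\varphi_n(v_{n+1,0})=v_{n,0}$, and for each $i$ a path $P_{n,i}$ in $G_n$ from $v_{n,0}$ to $v_{n,0}$ is given; $c_{n+1,i}$ has length $|P_{n,i}|$ and $\varphi_n$ maps its $j$-th vertex to the $j$-th vertex of $P_{n,i}$ (written $\varphi_n(c_{n+1,i})=P_{n,i}$). The paths are: $P_{0,1}=10\,e_{0,0}$; for $n\geq1$: $P_{n,i}=e_{n,0}+2c_{n,i}+2c_{n,i+1}+\dots+2c_{n,n}+e_{n,0}$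 for $2\leq i\leq n$; $P_{n,n+1}=(n+2)^2\big(\sum_{i=1}^n|c_{n,i}|\big)\,e_{n,0}$; and $P_{n,1}=(1\,e_{n,0}+2c_{n,1})+(2\,e_{n,0}+2c_{n,1})+\dots+(k_n\,e_{n,0}+2c_{n,1})+e_{n,0}+2c_{n,2}+\dots+2c_{n,n}+e_{n,0}$, where $k_n=2\big(1+\sum_{i=1}^n|c_{n,i}|\big)$. Let $X=\{x\in\prod_{n\geq0}V_n:\varphi_n(x_{n+1})=x_n\ \forall n\}$ with metric $d(x,y)=2^{-\min\{i:x_i\neq y_i\}}$ ($d(x,x)=0$); $X$ is a compact zero-dimensional metric space, and $T\colon X\to X$ defined by $T(x)=y$ iff $(x_n,y_n)\in E_n$ for all $n$ is a well-defined homeomorphism. Write $x_n$ for the $n$-th coordinate of $x$. *)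

theory Defs
  imports Main
begin

text \<open>
Vertices of G_n are pairs of naturals: (0,0) is v_{n,0}; (i,j) with 1 <= i <= n and
1 <= j < |c_{n,i}| is the j-th vertex of the cycle c_{n,i}.
A cycle based at (0,0) is represented by the list of its vertices omitting the final
(repeated) vertex (0,0); concatenation of such cycles is list append and the length of
the cycle equals the length of the list.
\<close>

type_synonym vert = "nat \<times> nat"

definition base :: vert where "base = (0, 0)"

definition loopc :: "vert list" where "loopc = [base]"

text \<open>c_{n,i} given the list ls of cycle lengths of G_n (index i is 1-based).\<close>
definition cyc :: "nat list \<Rightarrow> nat \<Rightarrow> vert list" where
  "cyc ls i = base # map (\<lambda>j. (i, j)) [1..<ls ! (i - 1)]"

definition rep :: "nat \<Rightarrow> vert list \<Rightarrow> vert list" where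
  "rep a c = concat (replicate a c)"

definition mkpaths :: "nat \<Rightarrow> nat list \<Rightarrow> vert list list" where
  "mkpaths n ls =
    (if n = 0 then [rep 10 loopc]
     else
       (let S = sum_list ls; k = 2 * (1 + S);
            tailp = (\<lambda>i. concat (map (\<lambda>m. rep 2 (cyc ls m)) [i..<n + 1]));
            P1 = concat (map (\<lambda>m. rep m loopc @ rep 2 (cyc ls 1)) [1..<k + 1])
                 @ loopc @ tailp 2 @ loopc;
            Pi = (\<lambda>i. loopc @ tailp i @ loopc);
            Plast = rep ((n + 2)^2 * S) loopc
        in [P1] @ map Pi [2..<n + 1] @ [Plast]))"

text \<open>lens n = [|c_{n,1}|, ..., |c_{n,n}|].\<close>
primrec lens :: "nat \<Rightarrow> nat list" where
  "lens 0 = []"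
| "lens (Suc n) = map length (mkpaths n (lens n))"

definition paths :: "nat \<Rightarrow> vert list list" where
  "paths n = mkpaths n (lens n)"

definition Vn :: "nat \<Rightarrow> vert set" where
  "Vn n = {base} \<union> {(i, j). 1 \<le> i \<and> i \<le> n \<and> 1 \<le> j \<and> j < lens n ! (i - 1)}"

definition path_edges :: "vert list \<Rightarrow> (vert \<times> vert) set" where
  "path_edges p = {(p ! j, p ! Suc j) | j. Suc j < length p}"

definition En :: "nat \<Rightarrow> (vert \<times> vert) set" where
  "En n = {(base, base)} \<union> (\<Union>i\<in>{1..n}. path_edges (cyc (lens n) i @ [base]))"

text \<open>phi_n : V_{n+1} \<rightarrow> V_n, mapping the j-th vertex of c_{n+1,i} to the j-th vertex of P_{n,i}.\<close>
definition phi :: "nat \<Rightarrow> vert \<Rightarrow> vert" where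
  "phi n v = (if v = base then base else paths n ! (fst v - 1) ! snd v)"

definition Xsp :: "(nat \<Rightarrow> vert) set" where
  "Xsp = {x. (\<forall>n. x n \<in> Vn n) \<and> (\<forall>n. phi n (x (Suc n)) = x n)}"

definition Tmap :: "(nat \<Rightarrow> vert) \<Rightarrow> (nat \<Rightarrow> vert)" where
  "Tmap x = (THE y. y \<in> Xsp \<and> (\<forall>n. (x n, y n) \<in> En n))"

definition pt :: "nat \<Rightarrow> vert" where "pt = (\<lambda>n. base)"

definition periodic_point :: "(nat \<Rightarrow> vert) \<Rightarrow> bool" where
  "periodic_point x \<longleftrightarrow> x \<in> Xsp \<and> (\<exists>k>0. (Tmap ^^ k) x = x)"

end

theory Submission
  imports Defs
begin

text \<open>
Every path \<open>P\<^sub>n\<^sub>,\<^sub>i\<close> either begins with the loop followed by a cycle, or is a power of the loop;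
in both cases its second vertex is \<open>v\<^sub>n\<^sub>,\<^sub>0\<close>. So a point all of whose coordinates are successors
of \<open>v\<^sub>n\<^sub>,\<^sub>0\<close> is \<open>p\<close>, and \<open>p\<close> is fixed. A point \<open>x \<noteq> p\<close> lies off \<open>v\<^sub>n\<^sub>,\<^sub>0\<close> from some level on,
where its successor is forced inside the cycle; since \<open>\<phi>\<^sub>n\<close> maps edges to edges this makes \<open>T\<close>
well defined. Finally the cycles of \<open>G\<^sub>n\<close> are longer than \<open>n\<close>. If \<open>x \<noteq> p\<close> had period \<open>k\<close>, its
orbit at a level \<open>n > k\<close> would be a \<open>k\<close>-periodic walk through some cycle \<open>c\<^sub>n\<^sub>,\<^sub>i\<close>: tracing it back
to the first vertex of \<open>c\<^sub>n\<^sub>,\<^sub>i\<close> and then \<open>k\<close> steps forward stays inside the cycle, so the walk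
cannot return after \<open>k\<close> steps.
\<close>

lemma length_rep: "length (rep a c) = a * length c"
  by (simp add: rep_def length_concat sum_list_replicate)

lemma mkpaths_shape:
  assumes "P \<in> set (mkpaths n ls)"
  shows "(\<exists>i r. 1 \<le> i \<and> i \<le> n \<and> P = loopc @ rep 2 (cyc ls i) @ r)
    \<or> P = rep (if n = 0 then 10 else (n + 2)^2 * sum_list ls) loopc"
proof (cases "n = 0")
  case True
  then show ?thesis using assms by (simp add: mkpaths_def)
next
  case False
  define tailp where "tailp i = concat (map (\<lambda>m. rep 2 (cyc ls m)) [i..<n + 1])" for i
  define P1 where "P1 = concat (map (\<lambda>m. rep m loopc @ rep 2 (cyc ls 1)) [1..<2 * (1 + sum_list ls) + 1])
      @ loopc @ tailp 2 @ loopc"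
  have tailp_Cons: "tailp i = rep 2 (cyc ls i) @ tailp (Suc i)" if "i \<le> n" for i
    using that by (simp add: tailp_def upt_conv_Cons del: upt_Suc)
  have "[1..<2 * (1 + sum_list ls) + 1] = 1 # [Suc 1..<2 * (1 + sum_list ls) + 1]"
    by (rule upt_conv_Cons) simp
  then have P1_shape: "\<exists>r. P1 = loopc @ rep 2 (cyc ls 1) @ r"
    by (simp add: P1_def rep_def)
  have "mkpaths n ls = P1 # map (\<lambda>i. loopc @ tailp i @ loopc) [2..<n + 1]
      @ [rep ((n + 2)^2 * sum_list ls) loopc]"
    using False by (simp add: mkpaths_def Let_def tailp_def P1_def)
  with assms consider (first) "P = P1"
    | (middle) i where "2 \<le> i" "i \<le> n" "P = loopc @ tailp i @ loopc"
    | (last) "P = rep ((n + 2)^2 * sum_list ls) loopc"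
    by (auto simp del: upt_Suc)
  then show ?thesis
  proof cases
    case first
    then show ?thesis using P1_shape False by fastforce
  next
    case (middle i)
    then have "P = loopc @ rep 2 (cyc ls i) @ tailp (Suc i) @ loopc" using tailp_Cons by simp
    with middle show ?thesis by (intro disjI1 exI[of _ i]) auto
  qed (use False in simp)
qed

lemma length_mkpaths: "length (mkpaths n ls) = Suc n"
  by (simp add: mkpaths_def Let_def; arith)

lemma length_lens: "length (lens n) = n"
  by (induct n) (auto simp: length_mkpaths)

lemma length_paths: "length (paths n) = Suc n"
  by (simp add: paths_def length_mkpaths)

lemma lens_Suc_nth: "k \<le> n \<Longrightarrow> lens (Suc n) ! k = length (paths n ! k)"
  by (simp add: paths_def length_mkpaths)

lemma length_cyc_ge: "ls ! (i - 1) \<le> length (cyc ls i)"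
  by (simp add: cyc_def)

lemma lens_gt: "l \<in> set (lens n) \<Longrightarrow> n < l"
proof (induction n arbitrary: l)
  case 0
  then show ?case by simp
next
  case (Suc n)
  then obtain P where P: "P \<in> set (mkpaths n (lens n))" and l: "l = length P" by auto
  have cyc_long: "n < length (cyc (lens n) i)" if "1 \<le> i" "i \<le> n" for i
    using Suc.IH[of "lens n ! (i - 1)"] length_cyc_ge[of "lens n" i] that
    by (simp add: length_lens)
  from mkpaths_shape[OF P] show ?case
  proof
    assume "\<exists>i r. 1 \<le> i \<and> i \<le> n \<and> P = loopc @ rep 2 (cyc (lens n) i) @ r"
    then show ?case using cyc_long by (force simp: l length_rep loopc_def)
  next
    assume last: "P = rep (if n = 0 then 10 else (n + 2)^2 * sum_list (lens n)) loopc"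
    show ?case
    proof (cases "n = 0")
      case False
      then have "0 < sum_list (lens n)"
        using Suc.IH[of "lens n ! 0"] member_le_sum_list[of "lens n ! 0" "lens n"]
        by (simp add: length_lens)
      then have "(n + 2)^2 \<le> (n + 2)^2 * sum_list (lens n)" by simp
      moreover have "Suc n < (n + 2)^2" by (simp add: power2_eq_square)
      moreover have "length P = (n + 2)^2 * sum_list (lens n)"
        using last False by (simp add: length_rep loopc_def)
      ultimately show ?thesis unfolding l by linarith
    qed (simp add: l last length_rep loopc_def)
  qed
qed

lemma lens_nth_gt: "k < n \<Longrightarrow> n < lens n ! k"
  by (rule lens_gt) (simp add: length_lens)

lemma paths_nth_1:
  assumes "P \<in> set (paths n)" "2 \<le> length P"
  shows "P ! 1 = base"
  using mkpaths_shape[of P n "lens n"] assms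
  by (auto simp: paths_def loopc_def rep_def cyc_def numeral_2_eq_2)

lemma path_edges_subset_iff: "path_edges p \<subseteq> E \<longleftrightarrow> successively (\<lambda>a b. (a, b) \<in> E) p"
  unfolding path_edges_def successively_conv_nth by blast

lemma cyc_path_edges_iff:
  "(v, w) \<in> path_edges (cyc ls i @ [base]) \<longleftrightarrow>
    (\<exists>j < max 1 (ls ! (i - 1)). v = (if j = 0 then base else (i, j)) \<and>
         w = (if Suc j < ls ! (i - 1) then (i, Suc j) else base))"
proof -
  let ?L = "ls ! (i - 1)"
  let ?p = "cyc ls i @ [base]"
  have len: "length ?p = Suc (max 1 ?L)" by (simp add: cyc_def)
  have nth: "?p ! j = (if j = 0 then base else (i, j))"
    and nth_Suc: "?p ! Suc j = (if Suc j < ?L then (i, Suc j) else base)"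
    if "j < max 1 ?L" for j
    using that by (auto simp: cyc_def nth_append nth_Cons split: nat.splits)
  have "(v, w) \<in> path_edges ?p \<longleftrightarrow> (\<exists>j < max 1 ?L. v = ?p ! j \<and> w = ?p ! Suc j)"
    unfolding path_edges_def len by auto
  then show ?thesis
    using nth nth_Suc by (metis (no_types, lifting))
qed

lemma En_iff: "(v, w) \<in> En n \<longleftrightarrow> (v = base \<and> w = base) \<or>
   (\<exists>i j. 1 \<le> i \<and> i \<le> n \<and> j < max 1 (lens n ! (i - 1)) \<and>
      v = (if j = 0 then base else (i, j)) \<and>
      w = (if Suc j < lens n ! (i - 1) then (i, Suc j) else base))"
  unfolding En_def using cyc_path_edges_iff by fastforce

definition cycle_succ :: "nat \<Rightarrow> vert \<Rightarrow> vert" where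
  "cycle_succ n v = (if Suc (snd v) < lens n ! (fst v - 1) then (fst v, Suc (snd v)) else base)"

lemma En_nonbase_succ: "(v, w) \<in> En n \<Longrightarrow> v \<noteq> base \<Longrightarrow> w = cycle_succ n v"
  unfolding En_iff cycle_succ_def by (auto split: if_splits)

lemma cycle_succ_in_En:
  assumes "v \<in> Vn n" "v \<noteq> base"
  shows "(v, cycle_succ n v) \<in> En n"
proof -
  obtain i j where "v = (i, j)" "1 \<le> i" "i \<le> n" "1 \<le> j" "j < lens n ! (i - 1)"
    using assms unfolding Vn_def by auto
  then show ?thesis
    unfolding En_iff cycle_succ_def by (intro disjI2 exI[of _ i] exI[of _ j]) auto
qed

lemma En_target_in_Vn: "(v, w) \<in> En n \<Longrightarrow> w \<in> Vn n"
  unfolding En_iff Vn_def by (auto split: if_splits)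

lemma En_pred_in_cycle: "(v, (i, Suc (Suc j))) \<in> En n \<Longrightarrow> 1 \<le> i \<Longrightarrow> v = (i, Suc j)"
  unfolding En_iff by (auto simp: base_def split: if_splits)

lemma En_from_base:
  "(base, w) \<in> En n \<Longrightarrow> w = base \<or> (\<exists>i. 1 \<le> i \<and> i \<le> n \<and> w = (i, 1) \<and> 1 < lens n ! (i - 1))"
  unfolding En_iff by (auto simp: base_def split: if_splits)

lemma base_loop_in_En: "(base, base) \<in> En n"
  by (simp add: En_def)

definition closed_walk :: "(vert \<times> vert) set \<Rightarrow> vert list \<Rightarrow> bool" where
  "closed_walk E p \<longleftrightarrow> (p \<noteq> [] \<longrightarrow> hd p = base) \<and> successively (\<lambda>a b. (a, b) \<in> E) (p @ [base])"

lemma closed_walk_Nil: "closed_walk E []"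
  by (simp add: closed_walk_def)

lemma closed_walk_append: "closed_walk E p \<Longrightarrow> closed_walk E q \<Longrightarrow> closed_walk E (p @ q)"
  unfolding closed_walk_def by (cases "p = [] \<or> q = []") (auto simp: successively_append_iff)

lemma closed_walk_concat: "(\<And>p. p \<in> set ps \<Longrightarrow> closed_walk E p) \<Longrightarrow> closed_walk E (concat ps)"
  by (induct ps) (auto simp: closed_walk_Nil closed_walk_append)

lemma closed_walk_rep: "closed_walk E p \<Longrightarrow> closed_walk E (rep a p)"
  unfolding rep_def by (rule closed_walk_concat) auto

lemma closed_walk_loopc: "closed_walk (En n) loopc"
  by (simp add: closed_walk_def loopc_def base_loop_in_En)

lemma closed_walk_cyc: "1 \<le> i \<Longrightarrow> i \<le> n \<Longrightarrow> closed_walk (En n) (cyc (lens n) i)"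
  unfolding closed_walk_def path_edges_subset_iff[symmetric] En_def by (auto simp: cyc_def)

lemma closed_walk_paths:
  assumes "P \<in> set (paths n)"
  shows "closed_walk (En n) P"
proof -
  have cycles: "closed_walk (En n) (concat (map (\<lambda>m. rep 2 (cyc (lens n) m)) [i..<n + 1]))"
    if "1 \<le> i" for i
    using that by (auto simp del: upt_Suc intro!: closed_walk_concat closed_walk_rep closed_walk_cyc)
  show ?thesis
  proof (cases "n = 0")
    case True
    then show ?thesis
      using assms by (simp add: paths_def mkpaths_def closed_walk_rep closed_walk_loopc)
  next
    case False
    then show ?thesis
      using assms cycles
      by (auto simp: paths_def mkpaths_def Let_def simp del: upt_Suc
          intro!: closed_walk_append closed_walk_concat closed_walk_rep closed_walk_loopc closed_walk_cyc)
  qed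
qed

lemma path_edges_map: "(v, w) \<in> path_edges p \<Longrightarrow> (f v, f w) \<in> path_edges (map f p)"
  unfolding path_edges_def by force

text \<open>The paper's \<open>\<phi>\<^sub>n(c\<^sub>n\<^sub>+\<^sub>1\<^sub>,\<^sub>i) = P\<^sub>n\<^sub>,\<^sub>i\<close>; in the list encoding this needs \<open>P\<^sub>n\<^sub>,\<^sub>i\<close> to be nonempty
  and to start at \<open>v\<^sub>n\<^sub>,\<^sub>0\<close>.\<close>

lemma map_phi_cyc:
  assumes "1 \<le> i" "i \<le> Suc n"
  shows "map (phi n) (cyc (lens (Suc n)) i) = paths n ! (i - 1)"
proof -
  define P where "P = paths n ! (i - 1)"
  have P: "P \<in> set (paths n)" using assms by (simp add: P_def length_paths)
  have L: "lens (Suc n) ! (i - 1) = length P"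
    using assms lens_Suc_nth[of "i - 1" n] by (simp add: P_def)
  have "Suc n < lens (Suc n) ! (i - 1)" using assms by (intro lens_nth_gt) simp
  then have "P \<noteq> []" unfolding L by auto
  then have "P ! 0 = base"
    using closed_walk_paths[OF P] by (simp add: closed_walk_def hd_conv_nth)
  have phi_cycle: "phi n (i, j) = P ! j" for j
    using assms by (simp add: phi_def P_def base_def)
  have cyc: "cyc (lens (Suc n)) i = base # map (\<lambda>j. (i, j)) [1..<length P]"
    unfolding cyc_def L ..
  have "phi n base = base" by (simp add: phi_def)
  with \<open>P \<noteq> []\<close> \<open>P ! 0 = base\<close> show ?thesis
    unfolding P_def[symmetric] cyc
    by (intro nth_equalityI) (auto simp: phi_cycle nth_Cons split: nat.split)
qed

lemma phi_preserves_En: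
  assumes "(v, w) \<in> En (Suc n)"
  shows "(phi n v, phi n w) \<in> En n"
proof (cases "v = base \<and> w = base")
  case True
  then show ?thesis by (simp add: phi_def base_loop_in_En)
next
  case False
  then obtain i where i: "1 \<le> i" "i \<le> Suc n"
    and edge: "(v, w) \<in> path_edges (cyc (lens (Suc n)) i @ [base])"
    using assms unfolding En_def by auto
  have "(phi n v, phi n w) \<in> path_edges (paths n ! (i - 1) @ [base])"
    using path_edges_map[OF edge, of "phi n"] map_phi_cyc[OF i] by (simp add: phi_def)
  moreover have "paths n ! (i - 1) \<in> set (paths n)"
    using i by (simp add: length_paths)
  ultimately show ?thesis
    using closed_walk_paths path_edges_subset_iff unfolding closed_walk_def by blast
qed

fun phi_iter :: "nat \<Rightarrow> nat \<Rightarrow> vert \<Rightarrow> vert" where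
  "phi_iter 0 m v = v"
| "phi_iter (Suc d) m v = phi m (phi_iter d (Suc m) v)"

lemma Xsp_phi_iter:
  assumes "x \<in> Xsp"
  shows "phi_iter d m (x (m + d)) = x m"
proof (induction d arbitrary: m)
  case 0
  then show ?case by simp
next
  case (Suc d)
  have "phi_iter d (Suc m) (x (Suc m + d)) = x (Suc m)" by (rule Suc.IH)
  then show ?case using assms by (simp add: Xsp_def)
qed

lemma phi_iter_preserves_En: "(u, v) \<in> En (m + d) \<Longrightarrow> (phi_iter d m u, phi_iter d m v) \<in> En m"
  by (induct d arbitrary: m) (auto intro: phi_preserves_En)

lemma phi_iter_base: "phi_iter d m base = base"
  by (induct d arbitrary: m) (auto simp: phi_def)

lemma pt_in_Xsp: "pt \<in> Xsp"
  by (simp add: Xsp_def pt_def Vn_def phi_def)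

lemma Xsp_eventually_nonbase:
  assumes "x \<in> Xsp" "x \<noteq> pt"
  obtains N where "\<And>m. N \<le> m \<Longrightarrow> x m \<noteq> base"
proof -
  obtain N where N: "x N \<noteq> base" using assms(2) unfolding pt_def by auto
  have "x m \<noteq> base" if "N \<le> m" for m
    using Xsp_phi_iter[OF assms(1), of "m - N" N] N that phi_iter_base by auto
  then show ?thesis using that by blast
qed

lemma Xsp_successor_of_pt:
  assumes "y \<in> Xsp" "\<And>n. (base, y n) \<in> En n"
  shows "y = pt"
proof
  fix n
  have yn: "y n = phi n (y (Suc n))" using assms(1) by (simp add: Xsp_def)
  from En_from_base[OF assms(2)[of "Suc n"]] show "y n = pt n"
  proof
    assume "y (Suc n) = base"
    then show ?thesis using yn by (simp add: phi_def pt_def)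
  next
    assume "\<exists>i. 1 \<le> i \<and> i \<le> Suc n \<and> y (Suc n) = (i, 1) \<and> 1 < lens (Suc n) ! (i - 1)"
    then obtain i where i: "1 \<le> i" "i \<le> Suc n" "y (Suc n) = (i, 1)" "1 < lens (Suc n) ! (i - 1)"
      by blast
    have "paths n ! (i - 1) ! 1 = base"
      using i lens_Suc_nth[of "i - 1" n] by (intro paths_nth_1[of _ n]) (simp_all add: length_paths)
    then show ?thesis using yn i by (simp add: phi_def pt_def base_def)
  qed
qed

lemma Xsp_successor_unique:
  assumes "x \<in> Xsp" "y \<in> Xsp" "y' \<in> Xsp"
    and "\<And>n. (x n, y n) \<in> En n" "\<And>n. (x n, y' n) \<in> En n"
  shows "y = y'"
proof (cases "x = pt")
  case True
  then have "\<And>n. x n = base" by (simp add: pt_def)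
  then have "y = pt" "y' = pt"
    using Xsp_successor_of_pt assms by metis+
  then show ?thesis by simp
next
  case False
  then obtain N where N: "\<And>m. N \<le> m \<Longrightarrow> x m \<noteq> base"
    using Xsp_eventually_nonbase assms(1) by blast
  have high: "y m = y' m" if "N \<le> m" for m
    using En_nonbase_succ[OF assms(4) N] En_nonbase_succ[OF assms(5) N] that by simp
  show ?thesis
  proof
    fix n
    define d where "d = N - n"
    have "y n = phi_iter d n (y (n + d))" using Xsp_phi_iter[OF assms(2)] by simp
    also have "\<dots> = phi_iter d n (y' (n + d))" using high[of "n + d"] by (simp add: d_def)
    also have "\<dots> = y' n" using Xsp_phi_iter[OF assms(3)] by simp
    finally show "y n = y' n" .
  qed
qed

lemma Xsp_successor_exists:
  assumes "x \<in> Xsp"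
  shows "\<exists>y \<in> Xsp. \<forall>n. (x n, y n) \<in> En n"
proof (cases "x = pt")
  case True
  then show ?thesis using pt_in_Xsp base_loop_in_En by (intro bexI[of _ pt]) (auto simp: pt_def)
next
  case False
  then obtain N where N: "\<And>m. N \<le> m \<Longrightarrow> x m \<noteq> base"
    using Xsp_eventually_nonbase assms by blast
  have x: "\<And>m. x m \<in> Vn m" "\<And>m. phi m (x (Suc m)) = x m"
    using assms by (simp_all add: Xsp_def)
  have succ_edge: "(x m, cycle_succ m (x m)) \<in> En m" if "N \<le> m" for m
    using cycle_succ_in_En x N that by blast
  define y where "y n = (if n < N then phi_iter (N - n) n (cycle_succ N (x N)) else cycle_succ n (x n))"
    for n
  have edge: "(x n, y n) \<in> En n" for n
  proof (cases "n < N")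
    case True
    with phi_iter_preserves_En[of "x N" _ n "N - n"] succ_edge[of N] Xsp_phi_iter[OF assms, of "N - n" n]
    show ?thesis unfolding y_def by simp
  next
    case False
    then show ?thesis using succ_edge unfolding y_def by simp
  qed
  have "phi n (y (Suc n)) = y n" for n
  proof (cases "N \<le> n")
    case True
    have "(x n, phi n (y (Suc n))) \<in> En n"
      using phi_preserves_En[OF edge[of "Suc n"]] x(2) by simp
    then show ?thesis using En_nonbase_succ N True unfolding y_def by simp
  next
    case False
    then consider "Suc n = N" | "Suc n < N" by linarith
    then show ?thesis
    proof cases
      case 1
      then show ?thesis unfolding y_def by auto
    next
      case 2
      then have "N - n = Suc (N - Suc n)" by simp
      with 2 show ?thesis unfolding y_def by simp
    qed
  qed
  then have "y \<in> Xsp" unfolding Xsp_def using En_target_in_Vn[OF edge] by auto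
  then show ?thesis using edge by blast
qed

lemma Tmap_step:
  assumes "x \<in> Xsp"
  shows "Tmap x \<in> Xsp" "(x n, Tmap x n) \<in> En n"
proof -
  have "\<exists>!y. y \<in> Xsp \<and> (\<forall>n. (x n, y n) \<in> En n)"
    using Xsp_successor_exists[OF assms] Xsp_successor_unique[OF assms] by blast
  then have "Tmap x \<in> Xsp \<and> (\<forall>n. (x n, Tmap x n) \<in> En n)"
    unfolding Tmap_def by (rule theI')
  then show "Tmap x \<in> Xsp" "(x n, Tmap x n) \<in> En n" by blast+
qed

lemma Tmap_pt: "Tmap pt = pt"
proof (rule Xsp_successor_of_pt)
  show "Tmap pt \<in> Xsp" by (rule Tmap_step(1)[OF pt_in_Xsp])
  show "(base, Tmap pt n) \<in> En n" for n
    using Tmap_step(2)[OF pt_in_Xsp, of n] by (simp add: pt_def)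
qed

lemma walk_forward_in_cycle:
  assumes walk: "\<And>t. (w t, w (Suc t)) \<in> En n"
    and "w t = (i, j)" "1 \<le> j" "j + s < lens n ! (i - 1)"
  shows "w (t + s) = (i, j + s)"
  using assms(4)
proof (induction s)
  case 0
  then show ?case using assms(2) by simp
next
  case (Suc s)
  then have "w (t + s) = (i, j + s)" by simp
  moreover have "(i, j + s) \<noteq> base" using \<open>1 \<le> j\<close> by (simp add: base_def)
  ultimately have "w (t + Suc s) = cycle_succ n (i, j + s)"
    using En_nonbase_succ[OF walk[of "t + s"]] by simp
  then show ?case using Suc.prems by (simp add: cycle_succ_def)
qed

lemma walk_backward_in_cycle:
  assumes walk: "\<And>t. (w t, w (Suc t)) \<in> En n"
    and "w (t + q) = (i, Suc q)" "1 \<le> i"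
  shows "w t = (i, 1)"
  using assms(2)
proof (induction q)
  case 0
  then show ?case by simp
next
  case (Suc q)
  have "(w (t + q), (i, Suc (Suc q))) \<in> En n"
    using walk[of "t + q"] Suc.prems by simp
  then have "w (t + q) = (i, Suc q)" using En_pred_in_cycle \<open>1 \<le> i\<close> by blast
  then show ?case by (rule Suc.IH)
qed

lemma periodic_walk_avoids_long_cycles:
  assumes walk: "\<And>t. (w t, w (Suc t)) \<in> En n"
    and period: "\<And>t. w (t + k) = w t" and "0 < k"
    and "w t = (i, Suc q)" "1 \<le> i" "Suc k < lens n ! (i - 1)"
  shows False
proof -
  have multiple: "w (t + m * k) = w t" for m
  proof (induction m)
    case (Suc m)
    have "t + Suc m * k = (t + m * k) + k" by simp
    then show ?case by (simp only: period Suc.IH)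
  qed simp
  define t0 where "t0 = t + q * k - q"
  have "q \<le> q * k" using \<open>0 < k\<close> by simp
  then have "t0 + q = t + q * k" unfolding t0_def by linarith
  then have "w (t0 + q) = (i, Suc q)" using multiple assms(4) by simp
  then have start: "w t0 = (i, 1)" using walk_backward_in_cycle[where w = w, OF walk] \<open>1 \<le> i\<close> by blast
  then have "w (t0 + k) = (i, 1 + k)"
    using walk_forward_in_cycle[where w = w, OF walk] \<open>Suc k < lens n ! (i - 1)\<close> by simp
  with start period[of t0] \<open>0 < k\<close> show False by simp
qed

lemma periodic_point_eq_pt:
  assumes "periodic_point x"
  shows "x = pt"
proof (rule ccontr)
  assume "x \<noteq> pt"
  from assms obtain k where x: "x \<in> Xsp" and "0 < k" and k: "(Tmap ^^ k) x = x"
    unfolding periodic_point_def by blast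
  obtain N where N: "\<And>m. N \<le> m \<Longrightarrow> x m \<noteq> base"
    using Xsp_eventually_nonbase[OF x \<open>x \<noteq> pt\<close>] by blast
  define n where "n = max N (Suc k)"
  have "x n \<in> Vn n" "x n \<noteq> base" using x N[of n] by (simp_all add: Xsp_def n_def)
  then obtain i j where xn: "x n = (i, j)" "1 \<le> i" "i \<le> n" "1 \<le> j"
    unfolding Vn_def by auto
  have orbit: "(Tmap ^^ t) x \<in> Xsp" for t
    by (induction t) (simp_all add: x Tmap_step)
  define w where "w t = (Tmap ^^ t) x n" for t
  show False
  proof (rule periodic_walk_avoids_long_cycles)
    show "(w t, w (Suc t)) \<in> En n" for t
      using Tmap_step(2)[OF orbit[of t]] by (simp add: w_def)
    show "w (t + k) = w t" for t
      by (simp add: w_def funpow_add k)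
    show "w 0 = (i, Suc (j - 1))" using xn by (simp add: w_def)
    show "Suc k < lens n ! (i - 1)"
      using lens_nth_gt[of "i - 1" n] xn unfolding n_def by simp
  qed (use \<open>0 < k\<close> xn in simp_all)
qed

theorem lemma3p2:
  shows "pt \<in> Xsp \<and> Tmap pt = pt \<and> (\<forall>x. periodic_point x \<longrightarrow> x = pt)"
  using pt_in_Xsp Tmap_pt periodic_point_eq_pt by blast

end
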